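(* Consider the noisy Hegselmann–Krause model with heterogeneously prejudiced agents described in the context, with $\epsilon\in(0,1)$, $\alpha\in(0,1]$ and noise bound $\delta\ge0$. For every initial condition $x(0)\in[0,1]^n$, almost surely $$\limsup_{t\to\infty}\max_{i\in\mathcal{S}_1}|x_i(t)-J_1|\le\frac{(1-\alpha)\epsilon+\delta}{\alpha}\quad\text{and}\quad \limsup_{t\to\infty}\max_{i\in\mathcal{S}_2}|x_i(t)-J_2|\le\frac{(1-\alpha)\epsilon+\delta}{\alpha}.$$
   Context: Agents $\mathcal{V}=\{1,\dots,n\}$ with opinions $x_i(t)\in[0,1]$, $t=0,1,2,\dots$. $\mathcal{V}=\mathcal{S}_1\cup\mathcal{S}_2$ with $\mathcal{S}_1\cap\mathcal{S}_2=\emptyset$; agents in $\mathcal{S}_k$ have prejudice value $J_k\in[0,1]$ ($k=1,2$), with $|J_1-J_2|>\epsilon$. Confidence bound $\epsilon$, attraction strength $\alpha\in(0,1]$. Neighbor set $\mathcal{N}_i(x(t))=\{j\in\mathcal{V}:|x_j(t)-x_i(t)|\le\epsilon\}$. For $i\in\mathcal{S}_k$, $x_i^*(t)=(1-\alpha)|\mathcal{N}_i(x(t))|^{-1}\sum_{j\in\mathcal{N}_i(x(t))}x_j(t)+\alpha J_k+\xi_i(t+1)$, and $x_i(t+1)$ equals $1$ if $x_i^*(t)>1$, $x_i^*(t)$ if $x_i^*(t)\in[0,1]$, $0$ if $x_i^*(t)<0$. The noises $\{\xi_i(t)\}_{i\in\mathcal{V},t\ge1}$ are i.i.d. with $E\xi_1(1)=0$,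 $E\xi_1(1)^2>0$ and $|\xi_1(1)|\le\delta$ almost surely. *)

theory Defs
  imports "HOL-Probability.Probability"
begin

definition hk_nbrs :: "real \<Rightarrow> ('v \<Rightarrow> real) \<Rightarrow> 'v \<Rightarrow> 'v set" where
  "hk_nbrs \<epsilon> x i = {j. \<bar>x j - x i\<bar> \<le> \<epsilon>}"

definition clip01 :: "real \<Rightarrow> real" where
  "clip01 y = (if y > 1 then 1 else if y < 0 then 0 else y)"

text \<open>Prejudice of agent i: J1 if i in S1, J2 otherwise (S2 is the complement of S1).\<close>
definition hk_step :: "real \<Rightarrow> real \<Rightarrow> 'v set \<Rightarrow> real \<Rightarrow> real \<Rightarrow>
    ('v::finite \<Rightarrow> real) \<Rightarrow> ('v \<Rightarrow> real) \<Rightarrow> 'v \<Rightarrow> real" where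
  "hk_step \<epsilon> \<alpha> S1 J1 J2 x noise i =
     clip01 ((1 - \<alpha>) * ((\<Sum>j\<in>hk_nbrs \<epsilon> x i. x j) / real (card (hk_nbrs \<epsilon> x i)))
             + \<alpha> * (if i \<in> S1 then J1 else J2) + noise i)"

fun hk_traj :: "real \<Rightarrow> real \<Rightarrow> 'v set \<Rightarrow> real \<Rightarrow> real \<Rightarrow> ('v::finite \<Rightarrow> real) \<Rightarrow>
    ('v \<Rightarrow> nat \<Rightarrow> real) \<Rightarrow> nat \<Rightarrow> 'v \<Rightarrow> real" where
  "hk_traj \<epsilon> \<alpha> S1 J1 J2 x0 \<xi> 0 = x0"
| "hk_traj \<epsilon> \<alpha> S1 J1 J2 x0 \<xi> (Suc t) =
     hk_step \<epsilon> \<alpha> S1 J1 J2 (hk_traj \<epsilon> \<alpha> S1 J1 J2 x0 \<xi> t) (\<lambda>i. \<xi> i (Suc t))"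

end

theory Submission
  imports Defs
begin

text \<open>The bound is deterministic: it holds along every noise realisation with
\<open>\<bar>\<xi>\<bar> \<le> \<delta>\<close>. The neighbourhood average of agent \<open>i\<close> lies within
\<open>\<epsilon>\<close> of \<open>x i\<close>, and clipping to \<open>[0,1]\<close> cannot increase the distance to a
prejudice in \<open>[0,1]\<close>. Hence the distance \<open>e t\<close> of \<open>x i t\<close> to its prejudice
satisfies \<open>e (t+1) \<le> (1 - \<alpha>) (e t + \<epsilon>) + \<delta>\<close>, and iterating gives
\<open>e t \<le> ((1 - \<alpha>) \<epsilon> + \<delta>) / \<alpha> + (1 - \<alpha>)^t\<close>.\<close>

lemma abs_clip01_sub_le:
  assumes "J \<in> {0..1}"
  shows "\<bar>clip01 y - J\<bar> \<le> \<bar>y - J\<bar>"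
  using assms by (auto simp: clip01_def)

lemma abs_hk_average_sub_le:
  fixes x :: "'v::finite \<Rightarrow> real"
  assumes "0 \<le> \<epsilon>"
  shows "\<bar>(\<Sum>j\<in>hk_nbrs \<epsilon> x i. x j) / real (card (hk_nbrs \<epsilon> x i)) - x i\<bar> \<le> \<epsilon>"
proof -
  let ?N = "hk_nbrs \<epsilon> x i"
  have "i \<in> ?N" using assms by (simp add: hk_nbrs_def)
  then have card_pos: "0 < real (card ?N)" by (auto simp: card_gt_0_iff)
  have "\<bar>(\<Sum>j\<in>?N. x j) - real (card ?N) * x i\<bar> = \<bar>\<Sum>j\<in>?N. x j - x i\<bar>"
    by (simp add: sum_subtractf)
  also have "\<dots> \<le> (\<Sum>j\<in>?N. \<bar>x j - x i\<bar>)" by (rule sum_abs)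
  also have "\<dots> \<le> real (card ?N) * \<epsilon>"
    using sum_bounded_above[of ?N "\<lambda>j. \<bar>x j - x i\<bar>" \<epsilon>] by (simp add: hk_nbrs_def)
  finally have "\<bar>(\<Sum>j\<in>?N. x j) - real (card ?N) * x i\<bar> / real (card ?N) \<le> \<epsilon>"
    using card_pos by (simp add: divide_le_eq mult.commute)
  moreover have "(\<Sum>j\<in>?N. x j) / real (card ?N) - x i
      = ((\<Sum>j\<in>?N. x j) - real (card ?N) * x i) / real (card ?N)"
    using card_pos by (auto simp: diff_divide_distrib)
  ultimately show ?thesis by simp
qed

lemma abs_hk_step_sub_prejudice_le:
  fixes x :: "'v::finite \<Rightarrow> real" and i :: 'v and S1 :: "'v set" and J1 J2 :: real
  defines "J \<equiv> if i \<in> S1 then J1 else J2"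
  assumes "J1 \<in> {0..1}" and "J2 \<in> {0..1}" and "\<alpha> \<le> 1" and "0 \<le> \<epsilon>"
    and "\<bar>noise i\<bar> \<le> \<delta>"
  shows "\<bar>hk_step \<epsilon> \<alpha> S1 J1 J2 x noise i - J\<bar> \<le> (1 - \<alpha>) * (\<bar>x i - J\<bar> + \<epsilon>) + \<delta>"
proof -
  define avg where "avg = (\<Sum>j\<in>hk_nbrs \<epsilon> x i. x j) / real (card (hk_nbrs \<epsilon> x i))"
  have "\<bar>avg - J\<bar> \<le> \<bar>x i - J\<bar> + \<epsilon>"
    using abs_hk_average_sub_le[OF \<open>0 \<le> \<epsilon>\<close>, of x i] by (simp add: avg_def)
  then have "(1 - \<alpha>) * \<bar>avg - J\<bar> \<le> (1 - \<alpha>) * (\<bar>x i - J\<bar> + \<epsilon>)"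
    using \<open>\<alpha> \<le> 1\<close> by (intro mult_left_mono) auto
  moreover have "\<bar>(1 - \<alpha>) * avg + \<alpha> * J + noise i - J\<bar> = \<bar>(1 - \<alpha>) * (avg - J) + noise i\<bar>"
    by (simp add: algebra_simps)
  moreover have "\<bar>(1 - \<alpha>) * (avg - J) + noise i\<bar> \<le> (1 - \<alpha>) * \<bar>avg - J\<bar> + \<bar>noise i\<bar>"
    using abs_triangle_ineq[of "(1 - \<alpha>) * (avg - J)" "noise i"] \<open>\<alpha> \<le> 1\<close> by (simp add: abs_mult)
  moreover have "J \<in> {0..1}" using assms(2,3) by (simp add: J_def)
  then have "\<bar>hk_step \<epsilon> \<alpha> S1 J1 J2 x noise i - J\<bar> \<le> \<bar>(1 - \<alpha>) * avg + \<alpha> * J + noise i - J\<bar>"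
    unfolding hk_step_def avg_def J_def by (rule abs_clip01_sub_le)
  ultimately show ?thesis using \<open>\<bar>noise i\<bar> \<le> \<delta>\<close> by linarith
qed

lemma affine_recurrence_bound:
  fixes e :: "nat \<Rightarrow> real"
  assumes "0 \<le> q" and "q < 1" and "e 0 \<le> 1" and "0 \<le> c"
    and "\<And>t. e (Suc t) \<le> q * e t + c"
  shows "e t \<le> c / (1 - q) + q ^ t"
proof (induction t)
  case 0
  have "0 \<le> c / (1 - q)" using assms(2,4) by simp
  then show ?case using assms(3) by simp
next
  case (Suc t)
  have "e (Suc t) \<le> q * (c / (1 - q) + q ^ t) + c"
    using assms(5)[of t] mult_left_mono[OF Suc \<open>0 \<le> q\<close>] by linarith
  also have "\<dots> = c / (1 - q) + q ^ Suc t"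
    using \<open>q < 1\<close> by (simp add: field_simps)
  finally show ?case .
qed

lemma abs_hk_traj_sub_prejudice_le:
  fixes x0 :: "'v::finite \<Rightarrow> real"
  assumes "J1 \<in> {0..1}" and "J2 \<in> {0..1}" and "0 < \<alpha>" and "\<alpha> \<le> 1"
    and "0 \<le> \<epsilon>" and "0 \<le> \<delta>" and "\<And>i. x0 i \<in> {0..1}"
    and "\<And>i t. 1 \<le> t \<Longrightarrow> \<bar>\<xi> i t\<bar> \<le> \<delta>"
  shows "\<bar>hk_traj \<epsilon> \<alpha> S1 J1 J2 x0 \<xi> t i - (if i \<in> S1 then J1 else J2)\<bar>
      \<le> ((1 - \<alpha>) * \<epsilon> + \<delta>) / \<alpha> + (1 - \<alpha>) ^ t"
proof -
  have "\<bar>hk_traj \<epsilon> \<alpha> S1 J1 J2 x0 \<xi> t i - (if i \<in> S1 then J1 else J2)\<bar>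
      \<le> ((1 - \<alpha>) * \<epsilon> + \<delta>) / (1 - (1 - \<alpha>)) + (1 - \<alpha>) ^ t"
  proof (rule affine_recurrence_bound)
    show "\<bar>hk_traj \<epsilon> \<alpha> S1 J1 J2 x0 \<xi> 0 i - (if i \<in> S1 then J1 else J2)\<bar> \<le> 1"
      using assms(1,2) assms(7)[of i] by auto
    fix t
    show "\<bar>hk_traj \<epsilon> \<alpha> S1 J1 J2 x0 \<xi> (Suc t) i - (if i \<in> S1 then J1 else J2)\<bar>
        \<le> (1 - \<alpha>) * \<bar>hk_traj \<epsilon> \<alpha> S1 J1 J2 x0 \<xi> t i - (if i \<in> S1 then J1 else J2)\<bar>
          + ((1 - \<alpha>) * \<epsilon> + \<delta>)"
      using abs_hk_step_sub_prejudice_le[OF assms(1,2,4,5), where noise = "\<lambda>i. \<xi> i (Suc t)" and i = i]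
        assms(8)[of "Suc t" i] by (simp add: algebra_simps)
  qed (use assms(3-6) in auto)
  then show ?thesis by simp
qed

lemma limsup_le_of_geometric_bound:
  fixes f :: "nat \<Rightarrow> ereal" and q :: real
  assumes "0 \<le> q" and "q < 1" and "\<And>t. f t \<le> ereal (B + q ^ t)"
  shows "limsup f \<le> ereal B"
proof -
  have "(\<lambda>t. B + q ^ t) \<longlonglongrightarrow> B + 0"
    using assms(1,2) by (intro tendsto_add tendsto_const LIMSEQ_power_zero) auto
  then have "(\<lambda>t. ereal (B + q ^ t)) \<longlonglongrightarrow> ereal B" by simp
  then have "limsup (\<lambda>t. ereal (B + q ^ t)) = ereal B" by (rule lim_imp_Limsup[OF trivial_limit_sequentially])
  moreover have "limsup f \<le> limsup (\<lambda>t. ereal (B + q ^ t))"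
    using assms(3) by (intro Limsup_mono always_eventually) auto
  ultimately show ?thesis by simp
qed

theorem theorem2:
  fixes M :: "'a measure" and \<xi> :: "'v::finite \<Rightarrow> nat \<Rightarrow> 'a \<Rightarrow> real"
    and S1 S2 :: "'v set" and J1 J2 \<epsilon> \<alpha> \<delta> :: real and x0 :: "'v \<Rightarrow> real"
  assumes "prob_space M"
    and "S1 \<inter> S2 = {}" and "S1 \<union> S2 = UNIV"
    and "J1 \<in> {0..1}" and "J2 \<in> {0..1}" and "\<bar>J1 - J2\<bar> > \<epsilon>"
    and "0 < \<epsilon>" and "\<epsilon> < 1" and "0 < \<alpha>" and "\<alpha> \<le> 1" and "0 \<le> \<delta>"
    and "\<And>i. x0 i \<in> {0..1}"
    and "\<And>i t. 1 \<le> t \<Longrightarrow> \<xi> i t \<in> borel_measurable M"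
    and "prob_space.indep_vars M (\<lambda>_. borel) (\<lambda>(i, t). \<xi> i t) (UNIV \<times> {1..})"
    and "\<And>i j t s. 1 \<le> t \<Longrightarrow> 1 \<le> s \<Longrightarrow> distr M borel (\<xi> i t) = distr M borel (\<xi> j s)"
    and "\<And>i. prob_space.expectation M (\<xi> i 1) = 0"
    and "\<And>i. prob_space.expectation M (\<lambda>\<omega>. (\<xi> i 1 \<omega>)\<^sup>2) > 0"
    and "\<And>i t. 1 \<le> t \<Longrightarrow> AE \<omega> in M. \<bar>\<xi> i t \<omega>\<bar> \<le> \<delta>"
  shows "AE \<omega> in M.
      limsup (\<lambda>t. SUP i\<in>S1. ereal \<bar>hk_traj \<epsilon> \<alpha> S1 J1 J2 x0 (\<lambda>i t. \<xi> i t \<omega>) t i - J1\<bar>)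
        \<le> ereal (((1 - \<alpha>) * \<epsilon> + \<delta>) / \<alpha>)
    \<and> limsup (\<lambda>t. SUP i\<in>S2. ereal \<bar>hk_traj \<epsilon> \<alpha> S1 J1 J2 x0 (\<lambda>i t. \<xi> i t \<omega>) t i - J2\<bar>)
        \<le> ereal (((1 - \<alpha>) * \<epsilon> + \<delta>) / \<alpha>)"
proof -
  let ?B = "((1 - \<alpha>) * \<epsilon> + \<delta>) / \<alpha>"
  have "AE \<omega> in M. \<forall>i t. 1 \<le> t \<longrightarrow> \<bar>\<xi> i t \<omega>\<bar> \<le> \<delta>"
    using assms(18) by (simp add: AE_all_countable)
  then show ?thesis
  proof (rule eventually_mono)
    fix \<omega> assume "\<forall>i t. 1 \<le> t \<longrightarrow> \<bar>\<xi> i t \<omega>\<bar> \<le> \<delta>"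
    then have bound: "\<bar>hk_traj \<epsilon> \<alpha> S1 J1 J2 x0 (\<lambda>i t. \<xi> i t \<omega>) t i - (if i \<in> S1 then J1 else J2)\<bar>
        \<le> ?B + (1 - \<alpha>) ^ t" for t i
      using assms(4,5,7,9-12) by (intro abs_hk_traj_sub_prejudice_le) auto
    have "i \<in> S2 \<Longrightarrow> i \<notin> S1" for i using assms(2) by blast
    then have "i \<in> S1 \<Longrightarrow> \<bar>hk_traj \<epsilon> \<alpha> S1 J1 J2 x0 (\<lambda>i t. \<xi> i t \<omega>) t i - J1\<bar> \<le> ?B + (1 - \<alpha>) ^ t"
      and "i \<in> S2 \<Longrightarrow> \<bar>hk_traj \<epsilon> \<alpha> S1 J1 J2 x0 (\<lambda>i t. \<xi> i t \<omega>) t i - J2\<bar> \<le> ?B + (1 - \<alpha>) ^ t"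
      for t i using bound[of t i] by auto
    then show "limsup (\<lambda>t. SUP i\<in>S1. ereal \<bar>hk_traj \<epsilon> \<alpha> S1 J1 J2 x0 (\<lambda>i t. \<xi> i t \<omega>) t i - J1\<bar>) \<le> ereal ?B
      \<and> limsup (\<lambda>t. SUP i\<in>S2. ereal \<bar>hk_traj \<epsilon> \<alpha> S1 J1 J2 x0 (\<lambda>i t. \<xi> i t \<omega>) t i - J2\<bar>) \<le> ereal ?B"
      using assms(9,10)
      by (intro conjI limsup_le_of_geometric_bound[where q = "1 - \<alpha>"] SUP_least) auto
  qed
qed

end
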